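(* Let $X=X_1\times\dots\times X_n$ with $|X_i|=2$ for every $i\in N$, and let $\langle\mathcal A,\mathcal U\rangle$ be a twofold partition of $X$ satisfying the standing assumptions. Then the following are equivalent: (a) $\langle\mathcal A,\mathcal U\rangle$ has a representation in Model $F^{c}$; (b) it has a representation in Model $F$; (c) it has a representation in Model $E$.
   Context: Setting. $N=\{1,\dots,n\}$, $n\ge 2$; $X=X_1\times\dots\times X_n$ with each $X_i$ finite. $(y_i,x_{-i})$ denotes $x$ with $i$-th coordinate replaced by $y_i$. A twofold partition $\langle\mathcal A,\mathcal U\rangle$ of $X$: disjoint, union $X$. Standing assumptions: every attribute $i$ is influential (exist $x_i,y_i,a_{-i}$ with $(x_i,a_{-i})\in\mathcal A$, $(y_i,a_{-i})\in\mathcal U$), and $\succsim_i$ on $X_i$, defined by $x_i\succsim_i y_i$ iff [for all $a_{-i}$, $(y_i,a_{-i})\in\mathcal A\Rightarrow(x_i,a_{-i})\in\mathcal A$], is antisymmetric. Semiorders: a semiorder on $Y$ is a reflexive, Ferrers ($xSy, zSw\Rightarrow xSw$ or $zSy$) and semitransitive ($xSy, ySz\Rightarrow xSw$ or $wSz$) relation; its induced weak order is $x S^{wo} y$ iff for all $z$, [$ySz\Rightarrow xSz$] and [$zSx\Rightarrow zSy$]. Common data of Models $E$ and $F$: for each $i$ a semiorder $S_i$ on $X_i$ (asymmetric part $P_i$) and a semiorder $U_i$ whose asymmetric part $V_i\subseteq P_i$, with $S_i^{wo}\cap U_i^{wo}$ complete; an up-closed family $\mathcal F\subseteq 2^N$;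 the relation $xSy$ iff $\{i:x_iS_iy_i\}\in\mathcal F$ and $\{i:y_iV_ix_i\}=\varnothing$, with asymmetric part $P$; a set $\mathcal P\subseteq X$ with no $p,q\in\mathcal P$ satisfying $pPq$. Model $E$: for all $x$, $x\in\mathcal A$ iff [$xSp$ for some $p\in\mathcal P$ and not $qPx$ for all $q\in\mathcal P$]. Model $F$: for all $x$, $x\in\mathcal U$ iff [$pPx$ for some $p\in\mathcal P$ and not $xPq$ for all $q\in\mathcal P$]. $F^{c}$: $F$ with a representation in which all $V_i$ are empty. *)

theory Defs
  imports Main "HOL-Library.FuncSet"
begin

definition attrs :: "nat \<Rightarrow> nat set" where
  "attrs n = {1..n}"

definition alts :: "nat \<Rightarrow> (nat \<Rightarrow> 'a set) \<Rightarrow> (nat \<Rightarrow> 'a) set" where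
  "alts n X = PiE (attrs n) X"

definition twofold_partition :: "nat \<Rightarrow> (nat \<Rightarrow> 'a set) \<Rightarrow> (nat \<Rightarrow> 'a) set \<Rightarrow> (nat \<Rightarrow> 'a) set \<Rightarrow> bool" where
  "twofold_partition n X A U \<longleftrightarrow> A \<inter> U = {} \<and> A \<union> U = alts n X"

definition influential :: "nat \<Rightarrow> (nat \<Rightarrow> 'a set) \<Rightarrow> (nat \<Rightarrow> 'a) set \<Rightarrow> (nat \<Rightarrow> 'a) set \<Rightarrow> nat \<Rightarrow> bool" where
  "influential n X A U i \<longleftrightarrow>
     (\<exists>xi\<in>X i. \<exists>yi\<in>X i. \<exists>a\<in>alts n X. a(i := xi) \<in> A \<and> a(i := yi) \<in> U)"

definition trace_rel :: "nat \<Rightarrow> (nat \<Rightarrow> 'a set) \<Rightarrow> (nat \<Rightarrow> 'a) set \<Rightarrow> nat \<Rightarrow> 'a \<Rightarrow> 'a \<Rightarrow> bool" where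
  "trace_rel n X A i xi yi \<longleftrightarrow> (\<forall>a\<in>alts n X. a(i := yi) \<in> A \<longrightarrow> a(i := xi) \<in> A)"

definition standing_assumptions :: "nat \<Rightarrow> (nat \<Rightarrow> 'a set) \<Rightarrow> (nat \<Rightarrow> 'a) set \<Rightarrow> (nat \<Rightarrow> 'a) set \<Rightarrow> bool" where
  "standing_assumptions n X A U \<longleftrightarrow>
     (\<forall>i\<in>attrs n. influential n X A U i) \<and>
     (\<forall>i\<in>attrs n. \<forall>xi\<in>X i. \<forall>yi\<in>X i.
         trace_rel n X A i xi yi \<and> trace_rel n X A i yi xi \<longrightarrow> xi = yi)"

definition asym_part :: "('b \<Rightarrow> 'b \<Rightarrow> bool) \<Rightarrow> 'b \<Rightarrow> 'b \<Rightarrow> bool" where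
  "asym_part R x y \<longleftrightarrow> R x y \<and> \<not> R y x"

definition semiorder :: "'b set \<Rightarrow> ('b \<Rightarrow> 'b \<Rightarrow> bool) \<Rightarrow> bool" where
  "semiorder Y S \<longleftrightarrow>
     (\<forall>x\<in>Y. S x x) \<and>
     (\<forall>x\<in>Y. \<forall>y\<in>Y. \<forall>z\<in>Y. \<forall>w\<in>Y. S x y \<and> S z w \<longrightarrow> S x w \<or> S z y) \<and>
     (\<forall>x\<in>Y. \<forall>y\<in>Y. \<forall>z\<in>Y. \<forall>w\<in>Y. S x y \<and> S y z \<longrightarrow> S x w \<or> S w z)"

definition induced_wo :: "'b set \<Rightarrow> ('b \<Rightarrow> 'b \<Rightarrow> bool) \<Rightarrow> 'b \<Rightarrow> 'b \<Rightarrow> bool" where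
  "induced_wo Y S x y \<longleftrightarrow> (\<forall>z\<in>Y. (S y z \<longrightarrow> S x z) \<and> (S z x \<longrightarrow> S z y))"

definition glob_S :: "nat \<Rightarrow> (nat \<Rightarrow> 'a \<Rightarrow> 'a \<Rightarrow> bool) \<Rightarrow> (nat \<Rightarrow> 'a \<Rightarrow> 'a \<Rightarrow> bool)
     \<Rightarrow> nat set set \<Rightarrow> (nat \<Rightarrow> 'a) \<Rightarrow> (nat \<Rightarrow> 'a) \<Rightarrow> bool" where
  "glob_S n Si Ui F x y \<longleftrightarrow>
     {i\<in>attrs n. Si i (x i) (y i)} \<in> F \<and>
     {i\<in>attrs n. asym_part (Ui i) (y i) (x i)} = {}"

definition glob_P :: "nat \<Rightarrow> (nat \<Rightarrow> 'a \<Rightarrow> 'a \<Rightarrow> bool) \<Rightarrow> (nat \<Rightarrow> 'a \<Rightarrow> 'a \<Rightarrow> bool)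
     \<Rightarrow> nat set set \<Rightarrow> (nat \<Rightarrow> 'a) \<Rightarrow> (nat \<Rightarrow> 'a) \<Rightarrow> bool" where
  "glob_P n Si Ui F = asym_part (glob_S n Si Ui F)"

definition common_data :: "nat \<Rightarrow> (nat \<Rightarrow> 'a set) \<Rightarrow> (nat \<Rightarrow> 'a \<Rightarrow> 'a \<Rightarrow> bool) \<Rightarrow> (nat \<Rightarrow> 'a \<Rightarrow> 'a \<Rightarrow> bool)
     \<Rightarrow> nat set set \<Rightarrow> (nat \<Rightarrow> 'a) set \<Rightarrow> bool" where
  "common_data n X Si Ui F Pr \<longleftrightarrow>
     (\<forall>i\<in>attrs n.
        semiorder (X i) (Si i) \<and> semiorder (X i) (Ui i) \<and>
        (\<forall>a\<in>X i. \<forall>b\<in>X i. asym_part (Ui i) a b \<longrightarrow> asym_part (Si i) a b) \<and>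
        (\<forall>a\<in>X i. \<forall>b\<in>X i.
           (induced_wo (X i) (Si i) a b \<and> induced_wo (X i) (Ui i) a b) \<or>
           (induced_wo (X i) (Si i) b a \<and> induced_wo (X i) (Ui i) b a))) \<and>
     F \<subseteq> Pow (attrs n) \<and>
     (\<forall>B\<in>F. \<forall>C. B \<subseteq> C \<and> C \<subseteq> attrs n \<longrightarrow> C \<in> F) \<and>
     Pr \<subseteq> alts n X \<and>
     (\<forall>p\<in>Pr. \<forall>q\<in>Pr. \<not> glob_P n Si Ui F p q)"

definition model_E_rep :: "nat \<Rightarrow> (nat \<Rightarrow> 'a set) \<Rightarrow> (nat \<Rightarrow> 'a) set
     \<Rightarrow> (nat \<Rightarrow> 'a \<Rightarrow> 'a \<Rightarrow> bool) \<Rightarrow> (nat \<Rightarrow> 'a \<Rightarrow> 'a \<Rightarrow> bool)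
     \<Rightarrow> nat set set \<Rightarrow> (nat \<Rightarrow> 'a) set \<Rightarrow> bool" where
  "model_E_rep n X A Si Ui F Pr \<longleftrightarrow>
     common_data n X Si Ui F Pr \<and>
     (\<forall>x\<in>alts n X. x \<in> A \<longleftrightarrow>
        (\<exists>p\<in>Pr. glob_S n Si Ui F x p) \<and> (\<forall>q\<in>Pr. \<not> glob_P n Si Ui F q x))"

definition model_F_rep :: "nat \<Rightarrow> (nat \<Rightarrow> 'a set) \<Rightarrow> (nat \<Rightarrow> 'a) set
     \<Rightarrow> (nat \<Rightarrow> 'a \<Rightarrow> 'a \<Rightarrow> bool) \<Rightarrow> (nat \<Rightarrow> 'a \<Rightarrow> 'a \<Rightarrow> bool)
     \<Rightarrow> nat set set \<Rightarrow> (nat \<Rightarrow> 'a) set \<Rightarrow> bool" where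
  "model_F_rep n X U Si Ui F Pr \<longleftrightarrow>
     common_data n X Si Ui F Pr \<and>
     (\<forall>x\<in>alts n X. x \<in> U \<longleftrightarrow>
        (\<exists>p\<in>Pr. glob_P n Si Ui F p x) \<and> (\<forall>q\<in>Pr. \<not> glob_P n Si Ui F x q))"

definition has_model_E :: "nat \<Rightarrow> (nat \<Rightarrow> 'a set) \<Rightarrow> (nat \<Rightarrow> 'a) set \<Rightarrow> (nat \<Rightarrow> 'a) set \<Rightarrow> bool" where
  "has_model_E n X A U \<longleftrightarrow> (\<exists>Si Ui F Pr. model_E_rep n X A Si Ui F Pr)"

definition has_model_F :: "nat \<Rightarrow> (nat \<Rightarrow> 'a set) \<Rightarrow> (nat \<Rightarrow> 'a) set \<Rightarrow> (nat \<Rightarrow> 'a) set \<Rightarrow> bool" where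
  "has_model_F n X A U \<longleftrightarrow> (\<exists>Si Ui F Pr. model_F_rep n X U Si Ui F Pr)"

definition has_model_Fc :: "nat \<Rightarrow> (nat \<Rightarrow> 'a set) \<Rightarrow> (nat \<Rightarrow> 'a) set \<Rightarrow> (nat \<Rightarrow> 'a) set \<Rightarrow> bool" where
  "has_model_Fc n X A U \<longleftrightarrow>
     (\<exists>Si Ui F Pr. model_F_rep n X U Si Ui F Pr \<and>
        (\<forall>i\<in>attrs n. \<forall>a\<in>X i. \<forall>b\<in>X i. \<not> asym_part (Ui i) a b))"

end

theory Submission
  imports Defs
begin

text \<open>In any representation in Model E or F, raising the level of one attribute in the weak order
  induced jointly by S_i and U_i can only enlarge the set of profiles dominated by an alternative
  and shrink the set of profiles dominating it, so it never moves an alternative from \<A> to \<U>;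
  hence every trace \<succsim>_i is complete. Conversely, if the traces are complete and every attribute
  has two levels, take S_i = \<succsim>_i, U_i trivial, the single profile p made of the \<succsim>_i-best
  levels, and for \<F> the up-closure of the sets {i. x_i \<succsim>_i p_i} with x \<in> \<A>. Since \<A> is
  upward closed for the traces, x S p holds exactly for x \<in> \<A>, and p S x holds for every x;
  this is a representation both in Model E and in Model F^c.\<close>

definition traces_complete :: "nat \<Rightarrow> (nat \<Rightarrow> 'a set) \<Rightarrow> (nat \<Rightarrow> 'a) set \<Rightarrow> bool" where
  "traces_complete n X A \<longleftrightarrow>
     (\<forall>i\<in>attrs n. \<forall>a\<in>X i. \<forall>b\<in>X i. trace_rel n X A i a b \<or> trace_rel n X A i b a)"

lemma alts_memD: "z \<in> alts n X \<Longrightarrow> i \<in> attrs n \<Longrightarrow> z i \<in> X i"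
  by (auto simp: alts_def)

lemma alts_fun_upd: "z \<in> alts n X \<Longrightarrow> i \<in> attrs n \<Longrightarrow> v \<in> X i \<Longrightarrow> z(i := v) \<in> alts n X"
  using PiE_fun_upd[of v X i z "attrs n"] by (simp add: alts_def insert_absorb)

lemma override_on_alts:
  "y \<in> alts n X \<Longrightarrow> x \<in> alts n X \<Longrightarrow> override_on y x D \<in> alts n X"
  by (auto simp: alts_def PiE_iff override_on_def extensional_def)

lemma override_on_attrs:
  "y \<in> alts n X \<Longrightarrow> x \<in> alts n X \<Longrightarrow> override_on y x (attrs n) = x"
  by (auto simp: alts_def PiE_def extensional_def override_on_def)

lemma trace_rel_refl: "trace_rel n X A i a a"
  unfolding trace_rel_def by blast

lemma trace_rel_trans:
  "trace_rel n X A i a b \<Longrightarrow> trace_rel n X A i b c \<Longrightarrow> trace_rel n X A i a c"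
  unfolding trace_rel_def by blast

lemma transp_trace_rel: "transp (trace_rel n X A i)"
  by (rule transpI) (rule trace_rel_trans)

lemma trace_dominance_mem:
  assumes y: "y \<in> A" "y \<in> alts n X" and x: "x \<in> alts n X"
    and dom: "\<forall>i\<in>attrs n. trace_rel n X A i (x i) (y i)"
  shows "x \<in> A"
proof -
  have "override_on y x D \<in> A" if "finite D" "D \<subseteq> attrs n" for D
    using that
  proof (induction D rule: finite_induct)
    case empty
    then show ?case using y by simp
  next
    case (insert j D)
    let ?z = "override_on y x D"
    have "?z \<in> alts n X" using override_on_alts[OF y(2) x] .
    moreover have "?z(j := y j) \<in> A" using insert by (simp add: fun_upd_idem)
    ultimately have "?z(j := x j) \<in> A"
      using dom insert.prems unfolding trace_rel_def by blast
    then show ?case unfolding override_on_insert .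
  qed
  from this[of "attrs n"] show ?thesis using override_on_attrs[OF y(2) x] by (simp add: attrs_def)
qed

lemma glob_S_mono:
  assumes up: "\<forall>B\<in>F. \<forall>C. B \<subseteq> C \<and> C \<subseteq> attrs n \<longrightarrow> C \<in> F"
    and xy: "glob_S n Si Ui F x y"
    and S: "\<And>j. j \<in> attrs n \<Longrightarrow> Si j (x j) (y j) \<Longrightarrow> Si j (x' j) (y' j)"
    and V: "\<And>j. j \<in> attrs n \<Longrightarrow> asym_part (Ui j) (y' j) (x' j) \<Longrightarrow> asym_part (Ui j) (y j) (x j)"
  shows "glob_S n Si Ui F x' y'"
proof -
  have "{j\<in>attrs n. Si j (x j) (y j)} \<subseteq> {j\<in>attrs n. Si j (x' j) (y' j)}" using S by blast
  then show ?thesis using up xy V unfolding glob_S_def by blast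
qed

lemma
  assumes up: "\<forall>B\<in>F. \<forall>C. B \<subseteq> C \<and> C \<subseteq> attrs n \<longrightarrow> C \<in> F"
    and woS: "induced_wo Y (Si i) a b" and woU: "induced_wo Y (Ui i) a b"
    and y: "y i \<in> Y"
  shows glob_S_raise_left: "glob_S n Si Ui F (z(i := b)) y \<Longrightarrow> glob_S n Si Ui F (z(i := a)) y"
    and glob_S_raise_right: "glob_S n Si Ui F y (z(i := a)) \<Longrightarrow> glob_S n Si Ui F y (z(i := b))"
proof -
  have S: "Si i b (y i) \<Longrightarrow> Si i a (y i)" "Si i (y i) a \<Longrightarrow> Si i (y i) b"
    using woS y unfolding induced_wo_def by auto
  have V: "asym_part (Ui i) (y i) a \<Longrightarrow> asym_part (Ui i) (y i) b"
    "asym_part (Ui i) b (y i) \<Longrightarrow> asym_part (Ui i) a (y i)"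
    using woU y unfolding induced_wo_def asym_part_def by auto
  show "glob_S n Si Ui F (z(i := a)) y" if "glob_S n Si Ui F (z(i := b)) y"
    by (rule glob_S_mono[OF up that]) (use S V in auto)
  show "glob_S n Si Ui F y (z(i := b))" if "glob_S n Si Ui F y (z(i := a))"
    by (rule glob_S_mono[OF up that]) (use S V in auto)
qed

lemma
  assumes "\<forall>B\<in>F. \<forall>C. B \<subseteq> C \<and> C \<subseteq> attrs n \<longrightarrow> C \<in> F"
    and "induced_wo Y (Si i) a b" "induced_wo Y (Ui i) a b" "y i \<in> Y"
  shows glob_P_raise_left: "glob_P n Si Ui F (z(i := b)) y \<Longrightarrow> glob_P n Si Ui F (z(i := a)) y"
    and glob_P_raise_right: "glob_P n Si Ui F y (z(i := a)) \<Longrightarrow> glob_P n Si Ui F y (z(i := b))"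
  using glob_S_raise_left[where Si=Si and Ui=Ui and i=i and y=y, OF assms]
    glob_S_raise_right[where Si=Si and Ui=Ui and i=i and y=y, OF assms]
  unfolding glob_P_def asym_part_def by blast+

lemma common_data_up_closed:
  "common_data n X Si Ui F Pr \<Longrightarrow> \<forall>B\<in>F. \<forall>C. B \<subseteq> C \<and> C \<subseteq> attrs n \<longrightarrow> C \<in> F"
  unfolding common_data_def by blast

lemma common_data_profiles_alts: "common_data n X Si Ui F Pr \<Longrightarrow> p \<in> Pr \<Longrightarrow> p \<in> alts n X"
  unfolding common_data_def by blast

lemma model_F_rep_trace_rel:
  assumes tp: "twofold_partition n X A U" and rep: "model_F_rep n X U Si Ui F Pr"
    and i: "i \<in> attrs n" and a: "a \<in> X i" and b: "b \<in> X i"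
    and wo: "induced_wo (X i) (Si i) a b" "induced_wo (X i) (Ui i) a b"
  shows "trace_rel n X A i a b"
  unfolding trace_rel_def
proof (intro ballI impI)
  fix z assume z: "z \<in> alts n X" and zb_A: "z(i := b) \<in> A"
  have cd: "common_data n X Si Ui F Pr" using rep unfolding model_F_rep_def by blast
  note raise = glob_P_raise_left[where Si=Si and Ui=Ui and i=i, OF common_data_up_closed[OF cd] wo]
    glob_P_raise_right[where Si=Si and Ui=Ui and i=i, OF common_data_up_closed[OF cd] wo]
  have Pr_i: "p i \<in> X i" if "p \<in> Pr" for p
    using alts_memD[OF common_data_profiles_alts[OF cd that] i] .
  have za: "z(i := a) \<in> alts n X" and zb: "z(i := b) \<in> alts n X"
    using alts_fun_upd[OF z i a] alts_fun_upd[OF z i b] .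
  have "z(i := b) \<notin> U" using zb_A tp unfolding twofold_partition_def by blast
  then have "\<not> ((\<exists>p\<in>Pr. glob_P n Si Ui F p (z(i := b))) \<and> (\<forall>q\<in>Pr. \<not> glob_P n Si Ui F (z(i := b)) q))"
    using rep zb unfolding model_F_rep_def by blast
  then have "\<not> ((\<exists>p\<in>Pr. glob_P n Si Ui F p (z(i := a))) \<and> (\<forall>q\<in>Pr. \<not> glob_P n Si Ui F (z(i := a)) q))"
    using raise Pr_i by blast
  then have "z(i := a) \<notin> U" using rep za unfolding model_F_rep_def by blast
  then show "z(i := a) \<in> A" using za tp unfolding twofold_partition_def by blast
qed

lemma model_E_rep_trace_rel:
  assumes rep: "model_E_rep n X A Si Ui F Pr"
    and i: "i \<in> attrs n" and a: "a \<in> X i" and b: "b \<in> X i"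
    and wo: "induced_wo (X i) (Si i) a b" "induced_wo (X i) (Ui i) a b"
  shows "trace_rel n X A i a b"
  unfolding trace_rel_def
proof (intro ballI impI)
  fix z assume z: "z \<in> alts n X" and zb_A: "z(i := b) \<in> A"
  have cd: "common_data n X Si Ui F Pr" using rep unfolding model_E_rep_def by blast
  note raise = glob_S_raise_left[where Si=Si and Ui=Ui and i=i, OF common_data_up_closed[OF cd] wo]
    glob_P_raise_right[where Si=Si and Ui=Ui and i=i, OF common_data_up_closed[OF cd] wo]
  have Pr_i: "p i \<in> X i" if "p \<in> Pr" for p
    using alts_memD[OF common_data_profiles_alts[OF cd that] i] .
  have za: "z(i := a) \<in> alts n X" and zb: "z(i := b) \<in> alts n X"
    using alts_fun_upd[OF z i a] alts_fun_upd[OF z i b] .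
  have "(\<exists>p\<in>Pr. glob_S n Si Ui F (z(i := b)) p) \<and> (\<forall>q\<in>Pr. \<not> glob_P n Si Ui F q (z(i := b)))"
    using rep zb_A zb unfolding model_E_rep_def by blast
  then have "(\<exists>p\<in>Pr. glob_S n Si Ui F (z(i := a)) p) \<and> (\<forall>q\<in>Pr. \<not> glob_P n Si Ui F q (z(i := a)))"
    using raise Pr_i by blast
  then show "z(i := a) \<in> A" using rep za unfolding model_E_rep_def by blast
qed

lemma common_data_traces_complete:
  assumes cd: "common_data n X Si Ui F Pr"
    and trace: "\<And>i a b. i \<in> attrs n \<Longrightarrow> a \<in> X i \<Longrightarrow> b \<in> X i \<Longrightarrow>
      induced_wo (X i) (Si i) a b \<Longrightarrow> induced_wo (X i) (Ui i) a b \<Longrightarrow> trace_rel n X A i a b"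
  shows "traces_complete n X A"
  unfolding traces_complete_def
proof (intro ballI)
  fix i a b assume iab: "i \<in> attrs n" "a \<in> X i" "b \<in> X i"
  then have "(induced_wo (X i) (Si i) a b \<and> induced_wo (X i) (Ui i) a b) \<or>
             (induced_wo (X i) (Si i) b a \<and> induced_wo (X i) (Ui i) b a)"
    using cd unfolding common_data_def by simp
  then show "trace_rel n X A i a b \<or> trace_rel n X A i b a" using trace iab by blast
qed

lemma has_model_F_traces_complete:
  assumes tp: "twofold_partition n X A U" and "has_model_F n X A U"
  shows "traces_complete n X A"
proof -
  obtain Si Ui F Pr where rep: "model_F_rep n X U Si Ui F Pr"
    using assms(2) unfolding has_model_F_def by blast
  then have cd: "common_data n X Si Ui F Pr" unfolding model_F_rep_def by blast
  show ?thesis using model_F_rep_trace_rel[OF tp rep] by (rule common_data_traces_complete[OF cd])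
qed

lemma has_model_E_traces_complete:
  assumes "has_model_E n X A U"
  shows "traces_complete n X A"
proof -
  obtain Si Ui F Pr where rep: "model_E_rep n X A Si Ui F Pr"
    using assms unfolding has_model_E_def by blast
  then have cd: "common_data n X Si Ui F Pr" unfolding model_E_rep_def by blast
  show ?thesis using model_E_rep_trace_rel[OF rep] by (rule common_data_traces_complete[OF cd])
qed

lemma semiorder_if_total_preorder:
  assumes total: "\<forall>x\<in>Y. \<forall>y\<in>Y. R x y \<or> R y x" and trans: "transp R"
  shows "semiorder Y R"
  unfolding semiorder_def using total transpD[OF trans] by blast

lemma induced_wo_if_transp: "transp R \<Longrightarrow> R a b \<Longrightarrow> induced_wo Y R a b"
  unfolding induced_wo_def by (blast dest: transpD)

lemma glob_S_trivial_U:
  "glob_S n Si (\<lambda>_ _ _. True) F x y \<longleftrightarrow> {i\<in>attrs n. Si i (x i) (y i)} \<in> F"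
  by (simp add: glob_S_def asym_part_def)

context
  fixes n :: nat and X :: "nat \<Rightarrow> 'a set" and A U :: "(nat \<Rightarrow> 'a) set"
  assumes two_levels: "\<forall>i\<in>attrs n. card (X i) = 2"
    and partition: "twofold_partition n X A U"
    and complete: "traces_complete n X A"
    and nonempty: "A \<noteq> {}"
begin

definition best_level :: "nat \<Rightarrow> 'a" where
  "best_level i = (SOME t. t \<in> X i \<and> (\<forall>b\<in>X i. trace_rel n X A i t b))"

definition best_alt :: "nat \<Rightarrow> 'a" where
  "best_alt = restrict best_level (attrs n)"

definition decisive_sets :: "nat set set" where
  "decisive_sets = {B. B \<subseteq> attrs n \<and>
     (\<exists>y\<in>A. {i\<in>attrs n. trace_rel n X A i (y i) (best_alt i)} \<subseteq> B)}"

abbreviation canonical_S :: "(nat \<Rightarrow> 'a) \<Rightarrow> (nat \<Rightarrow> 'a) \<Rightarrow> bool" where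
  "canonical_S \<equiv> glob_S n (trace_rel n X A) (\<lambda>_ _ _. True) decisive_sets"

abbreviation canonical_P :: "(nat \<Rightarrow> 'a) \<Rightarrow> (nat \<Rightarrow> 'a) \<Rightarrow> bool" where
  "canonical_P \<equiv> glob_P n (trace_rel n X A) (\<lambda>_ _ _. True) decisive_sets"

lemma best_level:
  assumes i: "i \<in> attrs n"
  shows "best_level i \<in> X i \<and> (\<forall>b\<in>X i. trace_rel n X A i (best_level i) b)"
proof -
  obtain a b where ab: "X i = {a, b}" using two_levels i by (auto simp: card_2_iff)
  have "trace_rel n X A i a b \<or> trace_rel n X A i b a"
    using complete i ab unfolding traces_complete_def by simp
  then have "\<exists>t. t \<in> X i \<and> (\<forall>c\<in>X i. trace_rel n X A i t c)"
  proof
    assume "trace_rel n X A i a b"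
    then show ?thesis using ab trace_rel_refl by (intro exI[of _ a]) simp
  next
    assume "trace_rel n X A i b a"
    then show ?thesis using ab trace_rel_refl by (intro exI[of _ b]) simp
  qed
  then show ?thesis unfolding best_level_def by (rule someI_ex)
qed

lemma best_alt_apply: "i \<in> attrs n \<Longrightarrow> best_alt i = best_level i"
  by (simp add: best_alt_def)

lemma best_alt_alts: "best_alt \<in> alts n X"
  unfolding best_alt_def alts_def by (simp add: restrict_PiE_iff best_level)

lemma trace_rel_via_best_level:
  assumes i: "i \<in> attrs n" and x: "x \<in> X i" and y: "y \<in> X i"
    and xy: "trace_rel n X A i y (best_level i) \<Longrightarrow> trace_rel n X A i x (best_level i)"
  shows "trace_rel n X A i x y"
proof (cases "trace_rel n X A i x (best_level i)")
  case True
  moreover have "trace_rel n X A i (best_level i) y" using best_level[OF i] y by blast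
  ultimately show ?thesis by (rule trace_rel_trans)
next
  case False
  then have "x \<noteq> best_level i" "y \<noteq> best_level i"
    using xy trace_rel_refl[of n X A i x] trace_rel_refl[of n X A i y] by auto
  moreover obtain a b where "X i = {a, b}" using two_levels i by (auto simp: card_2_iff)
  ultimately have "x = y" using x y best_level[OF i, THEN conjunct1] by auto
  then show ?thesis using trace_rel_refl by simp
qed

lemma canonical_S_best_alt_iff: "x \<in> alts n X \<Longrightarrow> canonical_S x best_alt \<longleftrightarrow> x \<in> A"
proof
  assume x: "x \<in> alts n X" and "canonical_S x best_alt"
  then obtain y where y: "y \<in> A" and sub: "{i\<in>attrs n. trace_rel n X A i (y i) (best_alt i)}
      \<subseteq> {i\<in>attrs n. trace_rel n X A i (x i) (best_alt i)}"
    unfolding glob_S_trivial_U decisive_sets_def by blast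
  have y_alt: "y \<in> alts n X" using y partition unfolding twofold_partition_def by blast
  have "trace_rel n X A i (x i) (y i)" if i: "i \<in> attrs n" for i
  proof (rule trace_rel_via_best_level[OF i alts_memD[OF x i] alts_memD[OF y_alt i]])
    show "trace_rel n X A i (x i) (best_level i)" if "trace_rel n X A i (y i) (best_level i)"
      using that sub i best_alt_apply[OF i] by auto
  qed
  then show "x \<in> A" using trace_dominance_mem[OF y y_alt x] by blast
next
  assume "x \<in> A"
  then show "canonical_S x best_alt" unfolding glob_S_trivial_U decisive_sets_def by blast
qed

lemma canonical_S_best_alt_left: "x \<in> alts n X \<Longrightarrow> canonical_S best_alt x"
proof -
  assume x: "x \<in> alts n X"
  have "{i\<in>attrs n. trace_rel n X A i (best_alt i) (x i)} = attrs n"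
    using best_level best_alt_apply alts_memD[OF x] by auto
  moreover have "attrs n \<in> decisive_sets" unfolding decisive_sets_def using nonempty by blast
  ultimately show ?thesis unfolding glob_S_trivial_U by simp
qed

lemma common_data_canonical:
  "common_data n X (trace_rel n X A) (\<lambda>_ _ _. True) decisive_sets {best_alt}"
proof -
  have levels: "\<forall>i\<in>attrs n. semiorder (X i) (trace_rel n X A i) \<and> semiorder (X i) (\<lambda>_ _. True) \<and>
      (\<forall>a\<in>X i. \<forall>b\<in>X i. asym_part (\<lambda>_ _. True) a b \<longrightarrow> asym_part (trace_rel n X A i) a b) \<and>
      (\<forall>a\<in>X i. \<forall>b\<in>X i.
         (induced_wo (X i) (trace_rel n X A i) a b \<and> induced_wo (X i) (\<lambda>_ _. True) a b) \<or>
         (induced_wo (X i) (trace_rel n X A i) b a \<and> induced_wo (X i) (\<lambda>_ _. True) b a))"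
    (is "\<forall>i\<in>attrs n. ?level i")
  proof
    fix i assume "i \<in> attrs n"
    then have total: "\<forall>a\<in>X i. \<forall>b\<in>X i. trace_rel n X A i a b \<or> trace_rel n X A i b a"
      using complete unfolding traces_complete_def by blast
    have "semiorder (X i) (trace_rel n X A i)"
      using semiorder_if_total_preorder[OF total transp_trace_rel] .
    moreover have "induced_wo (X i) (trace_rel n X A i) a b \<or> induced_wo (X i) (trace_rel n X A i) b a"
      if "a \<in> X i" "b \<in> X i" for a b
    proof -
      have "trace_rel n X A i a b \<or> trace_rel n X A i b a" using total that by blast
      then show ?thesis by (meson induced_wo_if_transp transp_trace_rel)
    qed
    ultimately show "?level i"
      by (simp add: semiorder_def[of _ "\<lambda>_ _. True"] asym_part_def induced_wo_def[of _ "\<lambda>_ _. True"])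
  qed
  have "decisive_sets \<subseteq> Pow (attrs n)"
    and "\<forall>B\<in>decisive_sets. \<forall>C. B \<subseteq> C \<and> C \<subseteq> attrs n \<longrightarrow> C \<in> decisive_sets"
    unfolding decisive_sets_def by blast+
  moreover have "{best_alt} \<subseteq> alts n X" using best_alt_alts by simp
  moreover have "\<forall>p\<in>{best_alt}. \<forall>q\<in>{best_alt}.
      \<not> canonical_P p q"
    unfolding glob_P_def asym_part_def by blast
  ultimately show ?thesis unfolding common_data_def using levels by blast
qed

lemma canonical_representations: "has_model_Fc n X A U \<and> has_model_E n X A U"
proof -
  have P_best: "canonical_P best_alt x \<longleftrightarrow> x \<notin> A"
    and P_to_best: "\<not> canonical_P x best_alt"
    if "x \<in> alts n X" for x
    using canonical_S_best_alt_iff[OF that] canonical_S_best_alt_left[OF that]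
    unfolding glob_P_def asym_part_def by blast+
  have U_iff: "x \<in> U \<longleftrightarrow> x \<notin> A" if "x \<in> alts n X" for x
    using partition that unfolding twofold_partition_def by blast
  have F: "model_F_rep n X U (trace_rel n X A) (\<lambda>_ _ _. True) decisive_sets {best_alt}"
    unfolding model_F_rep_def using common_data_canonical U_iff P_best P_to_best by simp
  have E: "model_E_rep n X A (trace_rel n X A) (\<lambda>_ _ _. True) decisive_sets {best_alt}"
    unfolding model_E_rep_def using common_data_canonical canonical_S_best_alt_iff P_best by simp
  have "\<forall>i\<in>attrs n. \<forall>a\<in>X i. \<forall>b\<in>X i. \<not> asym_part (\<lambda>_ _. True) a b"
    by (simp add: asym_part_def)
  then show ?thesis unfolding has_model_Fc_def has_model_E_def using F E by blast
qed

end

theorem proposition3: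
  fixes n :: nat and X :: "nat \<Rightarrow> 'a set" and A U :: "(nat \<Rightarrow> 'a) set"
  assumes "n \<ge> 2"
    and "\<forall>i\<in>attrs n. card (X i) = 2"
    and "twofold_partition n X A U"
    and "standing_assumptions n X A U"
  shows "(has_model_Fc n X A U \<longleftrightarrow> has_model_F n X A U) \<and>
         (has_model_F n X A U \<longleftrightarrow> has_model_E n X A U)"
proof -
  have "1 \<in> attrs n" using assms(1) by (simp add: attrs_def)
  then have "influential n X A U 1" using assms(4) unfolding standing_assumptions_def by blast
  then have nonempty: "A \<noteq> {}" unfolding influential_def by blast
  have "has_model_Fc n X A U \<Longrightarrow> has_model_F n X A U"
    unfolding has_model_Fc_def has_model_F_def by blast
  moreover have "has_model_F n X A U \<Longrightarrow> traces_complete n X A"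
    using has_model_F_traces_complete[OF assms(3)] .
  moreover have "has_model_E n X A U \<Longrightarrow> traces_complete n X A"
    using has_model_E_traces_complete .
  moreover have "traces_complete n X A \<Longrightarrow> has_model_Fc n X A U \<and> has_model_E n X A U"
    using canonical_representations[OF assms(2,3) _ nonempty] .
  ultimately show ?thesis by blast
qed

end
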